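(* Let $k\geq p\geq 0$ and $n\geq 2k-p+2$ be integers, and let $G$ be an $(n+p+2)$-closed balanced bipartite graph of order $2n$. If $$e(G)>n(n-k+p-1)+(k+2)(k-p+1),$$ then $G$ contains a complete bipartite subgraph of order $2n-k+p$. Furthermore, if $\delta(G)\geq k$, then $K_{n,n-k+p}\subseteq G$, or $k=p+2$ and $G\in\{N_{n,n}^{p,1},N_{n,n}^{p,2}\}$.
   Context: A bipartite graph $G=(X,Y;E)$ is balanced if $|X|=|Y|$. For an integer $r$, $G$ is $r$-closed if $d_G(x)+d_G(y)<r$ for every non-adjacent pair $x\in X$, $y\in Y$. $e(G)$ is the number of edges, $\delta(G)$ the minimum degree; $K_{a,b}\subseteq G$ means $G$ has a subgraph isomorphic to the complete bipartite graph $K_{a,b}$; $G\in\{\dots\}$ means up to isomorphism. $N_{n,n}^{p,1}$: parts $X=X_1\cup X_2\cup X_3$, $Y=Y_1\cup Y_2\cup Y_3$, $|X_1|=|Y_1|=n-p-2$, $|X_2|=|Y_2|=p+1$, $|X_3|=|Y_3|=1$; edges are all pairs between $X_i$ and $Y_i$ ($i=1,2,3$), between $X_1$ and $Y_2$, between $X_2$ and $Y_1\cup Y_3$, and between $X_3$ and $Y_2$. $N_{n,n}^{p,2}$: parts $X=X_1\cup X_2\cup X_3$, $Y=Y_1\cup Y_2\cup Y_3$, $|X_1|=|Y_1|=n-p-3$, $|X_2|=|Y_2|=p+2$, $|X_3|=|Y_3|=1$; edges are all pairs between $X_1$ and $Y_1$, between $X_2$ and $Y_2$, between $X_1$ and $Y_2$,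 between $X_2$ and $Y_1\cup Y_3$, and between $X_3$ and $Y_2$ (no edge between $X_3$ and $Y_3$). *)

theory Defs
  imports Main
begin

text \<open>A bipartite graph G = (X, Y; E) is given by two disjoint finite vertex sets X, Y
  and an edge set E \<subseteq> X \<times> Y (an edge {x,y} is stored as the pair (x,y) with x in X).\<close>

definition bip_graph :: "'a set \<Rightarrow> 'a set \<Rightarrow> ('a \<times> 'a) set \<Rightarrow> bool" where
  "bip_graph X Y E \<longleftrightarrow> finite X \<and> finite Y \<and> X \<inter> Y = {} \<and> E \<subseteq> X \<times> Y"

definition bip_adj :: "('a \<times> 'a) set \<Rightarrow> 'a \<Rightarrow> 'a \<Rightarrow> bool" where
  "bip_adj E u v \<longleftrightarrow> (u, v) \<in> E \<or> (v, u) \<in> E"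

definition bip_deg :: "'a set \<Rightarrow> 'a set \<Rightarrow> ('a \<times> 'a) set \<Rightarrow> 'a \<Rightarrow> nat" where
  "bip_deg X Y E v = card {w \<in> X \<union> Y. bip_adj E v w}"

definition r_closed :: "nat \<Rightarrow> 'a set \<Rightarrow> 'a set \<Rightarrow> ('a \<times> 'a) set \<Rightarrow> bool" where
  "r_closed r X Y E \<longleftrightarrow>
     (\<forall>x\<in>X. \<forall>y\<in>Y. (x, y) \<notin> E \<longrightarrow> bip_deg X Y E x + bip_deg X Y E y < r)"

definition min_deg_ge :: "nat \<Rightarrow> 'a set \<Rightarrow> 'a set \<Rightarrow> ('a \<times> 'a) set \<Rightarrow> bool" where
  "min_deg_ge k X Y E \<longleftrightarrow> (\<forall>v\<in>X \<union> Y. k \<le> bip_deg X Y E v)"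

definition has_K :: "nat \<Rightarrow> nat \<Rightarrow> 'a set \<Rightarrow> 'a set \<Rightarrow> ('a \<times> 'a) set \<Rightarrow> bool" where
  "has_K a b X Y E \<longleftrightarrow>
     (\<exists>S T. S \<subseteq> X \<and> T \<subseteq> Y \<and> card S = a \<and> card T = b \<and> S \<times> T \<subseteq> E)"

definition K_sub :: "nat \<Rightarrow> nat \<Rightarrow> 'a set \<Rightarrow> 'a set \<Rightarrow> ('a \<times> 'a) set \<Rightarrow> bool" where
  "K_sub a b X Y E \<longleftrightarrow> has_K a b X Y E \<or> has_K b a X Y E"

definition bip_iso ::
  "'a set \<Rightarrow> 'a set \<Rightarrow> ('a \<times> 'a) set \<Rightarrow> 'b set \<Rightarrow> 'b set \<Rightarrow> ('b \<times> 'b) set \<Rightarrow> bool" where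
  "bip_iso X Y E X' Y' E' \<longleftrightarrow>
     (\<exists>f. bij_betw f (X \<union> Y) (X' \<union> Y') \<and>
          (\<forall>u\<in>X \<union> Y. \<forall>v\<in>X \<union> Y. bip_adj E u v \<longleftrightarrow> bip_adj E' (f u) (f v)))"

text \<open>The graphs N^{p,1}_{n,n} and N^{p,2}_{n,n}: vertices (False,i) form X, (True,i) form Y,
  i < n. Index blocks: 1, 2, 3.\<close>
definition NX :: "nat \<Rightarrow> (bool \<times> nat) set" where
  "NX n = {(False, i) | i. i < n}"

definition NY :: "nat \<Rightarrow> (bool \<times> nat) set" where
  "NY n = {(True, i) | i. i < n}"

text \<open>N^{p,1}: |X_1| = n-p-2, |X_2| = p+1, |X_3| = 1.\<close>
definition blk1 :: "nat \<Rightarrow> nat \<Rightarrow> nat \<Rightarrow> nat" where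
  "blk1 n p i = (if i < n - p - 2 then 1 else if i < n - 1 then 2 else 3)"

definition N1E :: "nat \<Rightarrow> nat \<Rightarrow> ((bool \<times> nat) \<times> (bool \<times> nat)) set" where
  "N1E n p = {((False, i), (True, j)) | i j. i < n \<and> j < n \<and>
     (blk1 n p i, blk1 n p j) \<in> {(1,1), (2,2), (3,3), (1,2), (2,1), (2,3), (3,2)}}"

text \<open>N^{p,2}: |X_1| = n-p-3, |X_2| = p+2, |X_3| = 1; no edge between X_3 and Y_3.\<close>
definition blk2 :: "nat \<Rightarrow> nat \<Rightarrow> nat \<Rightarrow> nat" where
  "blk2 n p i = (if i < n - p - 3 then 1 else if i < n - 1 then 2 else 3)"

definition N2E :: "nat \<Rightarrow> nat \<Rightarrow> ((bool \<times> nat) \<times> (bool \<times> nat)) set" where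
  "N2E n p = {((False, i), (True, j)) | i j. i < n \<and> j < n \<and>
     (blk2 n p i, blk2 n p j) \<in> {(1,1), (2,2), (1,2), (2,1), (2,3), (3,2)}}"

end

theory Submission
  imports Defs
begin

text \<open>Pass to the bipartite complement M = X \<times> Y - E. Closedness of G says that every edge of M
  has degree sum at least N = n - p - 1, and the edge bound says |M| < (q + 1)(N - q - 1) for
  q = k - p. Averaging over degree thresholds yields a vertex cover of M with fewer than N - q
  vertices. In a minimum cover every vertex has a private neighbour, so its M-degree is at least
  N minus the size of its own side of the cover; double counting the edges at the cover then
  shows that a minimum cover has at most q vertices. The uncovered vertices span a complete
  bipartite subgraph of G on at least 2n - q vertices. If \<delta>(G) \<ge> k, a cover meeting both sides
  forces k = p + 2 and a cover {x0, y0}, and then G is K_{n,n} minus the two stars of M at x0 and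
  y0, which is N^{p,1} or N^{p,2} according to whether x0 y0 is an edge.\<close>

definition out_deg :: "('a \<times> 'b) set \<Rightarrow> 'a \<Rightarrow> nat" where
  "out_deg M x = card (M `` {x})"

definition vertex_cover :: "'a set \<Rightarrow> 'b set \<Rightarrow> ('a \<times> 'b) set \<Rightarrow> 'a set \<Rightarrow> 'b set \<Rightarrow> bool" where
  "vertex_cover X Y M CX CY \<longleftrightarrow> CX \<subseteq> X \<and> CY \<subseteq> Y \<and> (\<forall>(x, y) \<in> M. x \<in> CX \<or> y \<in> CY)"

definition min_vertex_cover :: "'a set \<Rightarrow> 'b set \<Rightarrow> ('a \<times> 'b) set \<Rightarrow> 'a set \<Rightarrow> 'b set \<Rightarrow> bool" where
  "min_vertex_cover X Y M CX CY \<longleftrightarrow> vertex_cover X Y M CX CY \<and>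
     (\<forall>CX' CY'. vertex_cover X Y M CX' CY' \<longrightarrow> card CX + card CY \<le> card CX' + card CY')"

lemma vertex_cover_converse:
  "vertex_cover Y X (converse M) CY CX \<longleftrightarrow> vertex_cover X Y M CX CY"
  unfolding vertex_cover_def by blast

lemma min_vertex_cover_converse:
  "min_vertex_cover Y X (converse M) CY CX \<longleftrightarrow> min_vertex_cover X Y M CX CY"
  unfolding min_vertex_cover_def vertex_cover_converse by (metis add.commute)

lemma min_vertex_cover_exists:
  assumes "vertex_cover X Y M CX CY"
  obtains CX' CY' where "min_vertex_cover X Y M CX' CY'"
proof -
  obtain C where "vertex_cover X Y M (fst C) (snd C)"
    and "\<forall>C'. vertex_cover X Y M (fst C') (snd C') \<longrightarrow>
           card (fst C) + card (snd C) \<le> card (fst C') + card (snd C')"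
    using ex_has_least_nat[of "\<lambda>C. vertex_cover X Y M (fst C) (snd C)" "(CX, CY)"
        "\<lambda>C. card (fst C) + card (snd C)"] assms by auto
  then show ?thesis
    using that unfolding min_vertex_cover_def by (metis fst_conv snd_conv)
qed

lemma card_eq_sum_out_deg:
  assumes "finite C" "finite Y" "M \<subseteq> C \<times> Y"
  shows "card M = (\<Sum>x\<in>C. out_deg M x)"
proof -
  have "card M = card (SIGMA x:C. M `` {x})"
    using assms(3) by (intro arg_cong[where f = card]) auto
  also have "\<dots> = (\<Sum>x\<in>C. card (M `` {x}))"
    using assms by (intro card_SigmaI) (auto intro: finite_subset[of _ Y])
  finally show ?thesis by (simp add: out_deg_def)
qed

lemma sum_card_less_le_sum:
  fixes f :: "'a \<Rightarrow> nat"
  assumes "finite X"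
  shows "(\<Sum>a<N. card {x\<in>X. a < f x}) \<le> (\<Sum>x\<in>X. f x)"
proof -
  have "(\<Sum>a<N. card {x\<in>X. a < f x}) = (\<Sum>a<N. \<Sum>x\<in>X. if a < f x then 1 else 0)"
    using assms by (simp add: sum.If_cases Int_def)
  also have "\<dots> = (\<Sum>x\<in>X. \<Sum>a<N. if a < f x then 1 else 0)"
    by (rule sum.swap)
  also have "\<dots> = (\<Sum>x\<in>X. card {a\<in>{..<N}. a < f x})"
    by (simp add: sum.If_cases Int_def)
  also have "\<dots> \<le> (\<Sum>x\<in>X. f x)"
  proof (rule sum_mono)
    fix x
    have "{a\<in>{..<N}. a < f x} \<subseteq> {..<f x}" by auto
    then show "card {a\<in>{..<N}. a < f x} \<le> f x"
      using card_mono[of "{..<f x}"] by simp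
  qed
  finally show ?thesis .
qed

text \<open>An edge (x, y) of M has out_deg M x > a or out_deg M\<inverse> y \<ge> N - a; the sum over all
  thresholds a < N of the sizes of these covers is at most 2 |M|.\<close>

lemma threshold_vertex_cover:
  assumes fin: "finite X" "finite Y" and M: "M \<subseteq> X \<times> Y"
    and closed: "\<forall>(x, y)\<in>M. N \<le> out_deg M x + out_deg (converse M) y"
    and small: "2 * card M < N * s"
  shows "\<exists>CX CY. vertex_cover X Y M CX CY \<and> card CX + card CY < s"
proof -
  define A where "A a = card {x\<in>X. a < out_deg M x}" for a
  define B where "B b = card {y\<in>Y. b < out_deg (converse M) y}" for b
  have "(\<Sum>a<N. A a) \<le> card M"
    unfolding A_def card_eq_sum_out_deg[OF fin M] by (rule sum_card_less_le_sum[OF fin(1)])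
  moreover have "(\<Sum>a<N. B (N - Suc a)) = (\<Sum>b<N. B b)"
    by (rule sum.nat_diff_reindex)
  moreover have "card M = (\<Sum>y\<in>Y. out_deg (converse M) y)"
    using card_eq_sum_out_deg[OF fin(2,1), of "converse M"] M by auto
  then have "(\<Sum>b<N. B b) \<le> card M"
    unfolding B_def using sum_card_less_le_sum[OF fin(2)] by metis
  ultimately have "(\<Sum>a<N. A a + B (N - Suc a)) < N * s"
    using small by (simp add: sum.distrib)
  moreover have "N * s \<le> (\<Sum>a<N. A a + B (N - Suc a))"
    if "\<forall>a<N. s \<le> A a + B (N - Suc a)"
    using sum_bounded_below[of "{..<N}" s "\<lambda>a. A a + B (N - Suc a)"] that by simp
  ultimately obtain a where a: "a < N" "A a + B (N - Suc a) < s"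
    using not_less by blast
  have "vertex_cover X Y M {x\<in>X. a < out_deg M x} {y\<in>Y. N - Suc a < out_deg (converse M) y}"
    using closed M a(1) unfolding vertex_cover_def by fastforce
  then show ?thesis using a(2) unfolding A_def B_def by blast
qed

lemma min_vertex_cover_out_deg:
  assumes cover: "min_vertex_cover X Y M CX CY" and fin: "finite X"
    and closed: "\<forall>(x, y)\<in>M. N \<le> out_deg M x + out_deg (converse M) y"
    and x: "x \<in> CX"
  shows "N \<le> out_deg M x + card CX"
proof -
  \<comment> \<open>By minimality x has a private neighbour y, and all neighbours of y lie in CX.\<close>
  have finCX: "finite CX" using cover fin
    unfolding min_vertex_cover_def vertex_cover_def by (auto intro: finite_subset)
  have "\<exists>y. (x, y) \<in> M \<and> y \<notin> CY"
  proof (rule ccontr)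
    assume "\<nexists>y. (x, y) \<in> M \<and> y \<notin> CY"
    then have "vertex_cover X Y M (CX - {x}) CY"
      using cover unfolding min_vertex_cover_def vertex_cover_def by blast
    moreover have "card (CX - {x}) < card CX" using finCX x by (rule card_Diff1_less)
    ultimately show False using cover unfolding min_vertex_cover_def by fastforce
  qed
  then obtain y where y: "(x, y) \<in> M" "y \<notin> CY" by blast
  have "converse M `` {y} \<subseteq> CX"
    using cover y(2) unfolding min_vertex_cover_def vertex_cover_def by blast
  then have "out_deg (converse M) y \<le> card CX"
    unfolding out_deg_def using finCX by (rule card_mono[rotated])
  then show ?thesis using closed y(1) by fastforce
qed

lemma min_vertex_cover_out_deg_converse:
  assumes cover: "min_vertex_cover X Y M CX CY" and fin: "finite Y"
    and closed: "\<forall>(x, y)\<in>M. N \<le> out_deg M x + out_deg (converse M) y"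
    and y: "y \<in> CY"
  shows "N \<le> out_deg (converse M) y + card CY"
proof -
  have "\<forall>(y, x)\<in>converse M. N \<le> out_deg (converse M) y + out_deg (converse (converse M)) x"
    using closed by auto
  then show ?thesis
    using min_vertex_cover_out_deg[OF min_vertex_cover_converse[THEN iffD2, OF cover] fin] y
    by blast
qed

lemma sum_out_deg_le_card_plus_card_Times:
  assumes fin: "finite X" "finite Y" and M: "M \<subseteq> X \<times> Y"
    and C: "CX \<subseteq> X" "CY \<subseteq> Y"
  shows "(\<Sum>x\<in>CX. out_deg M x) + (\<Sum>y\<in>CY. out_deg (converse M) y)
           \<le> card M + card CX * card CY"
proof -
  have finC: "finite CX" "finite CY" using fin C by (auto intro: finite_subset)
  have finM: "finite M" using fin M by (auto intro: finite_subset)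
  define MX where "MX = {e\<in>M. fst e \<in> CX}"
  define MY where "MY = {e\<in>M. snd e \<in> CY}"
  have "card MX = (\<Sum>x\<in>CX. out_deg MX x)"
    using M by (intro card_eq_sum_out_deg[OF finC(1) fin(2)]) (auto simp: MX_def)
  also have "\<dots> = (\<Sum>x\<in>CX. out_deg M x)"
    by (intro sum.cong) (auto simp: MX_def out_deg_def intro: arg_cong[where f = card])
  finally have cMX: "card MX = (\<Sum>x\<in>CX. out_deg M x)" .
  have "card MY = card (converse MY)" by simp
  also have "\<dots> = (\<Sum>y\<in>CY. out_deg (converse MY) y)"
    using M by (intro card_eq_sum_out_deg[OF finC(2) fin(1)]) (auto simp: MY_def)
  also have "\<dots> = (\<Sum>y\<in>CY. out_deg (converse M) y)"
    by (intro sum.cong) (auto simp: MY_def out_deg_def intro: arg_cong[where f = card])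
  finally have cMY: "card MY = (\<Sum>y\<in>CY. out_deg (converse M) y)" .
  have "card MX + card MY = card (MX \<union> MY) + card (MX \<inter> MY)"
    using finM by (intro card_Un_Int) (auto simp: MX_def MY_def)
  also have "\<dots> \<le> card M + card (CX \<times> CY)"
    using finM finC by (intro add_mono card_mono) (auto simp: MX_def MY_def)
  finally show ?thesis using cMX cMY by (simp add: card_cartesian_product)
qed

lemma double_prod_le_prod_diff:
  fixes q N :: nat
  assumes "2 * q + 1 \<le> N"
  shows "2 * ((q + 1) * (N - q - 1)) \<le> N * (N - q)"
proof -
  obtain t where t: "N = 2 * q + 1 + t" using assms le_Suc_ex by blast
  then show ?thesis by (simp add: algebra_simps)
qed

lemma mult_diff_add_mult_le:
  fixes a b q N :: nat
  assumes "q + 1 \<le> a + b" "a + b + q + 1 \<le> N"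
  shows "(q + 1) * (N - q - 1) + a * b \<le> a * (N - a) + b * (N - b)"
proof -
  have diff: "int (N - q - 1) = int N - int q - 1"
    "int (N - a) = int N - int a" "int (N - b) = int N - int b"
    using assms by auto
  have "int a * (int N - int a) + int b * (int N - int b)
      = (int q + 1) * (int N - int q - 1) + int a * int b
        + ((int a + int b - int q - 1) * (int N - int q - 1 - int a - int b) + int a * int b)"
    by (simp add: algebra_simps)
  moreover have "0 \<le> (int a + int b - int q - 1) * (int N - int q - 1 - int a - int b)"
    using assms by (intro mult_nonneg_nonneg) auto
  moreover have "0 \<le> int a * int b" by simp
  ultimately have "(int q + 1) * (int N - int q - 1) + int a * int b
      \<le> int a * (int N - int a) + int b * (int N - int b)"
    by linarith
  then have "int ((q + 1) * (N - q - 1) + a * b) \<le> int (a * (N - a) + b * (N - b))"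
    unfolding of_nat_add of_nat_mult diff by simp
  then show ?thesis by (simp only: of_nat_le_iff)
qed

lemma small_min_vertex_cover:
  assumes fin: "finite X" "finite Y" and M: "M \<subseteq> X \<times> Y"
    and closed: "\<forall>(x, y)\<in>M. N \<le> out_deg M x + out_deg (converse M) y"
    and q: "2 * q + 1 \<le> N" and small: "card M < (q + 1) * (N - q - 1)"
  obtains CX CY where "min_vertex_cover X Y M CX CY" "card CX + card CY \<le> q"
proof -
  have "2 * card M < N * (N - q)" using small double_prod_le_prod_diff[OF q] by linarith
  then obtain CX0 CY0 where cover0: "vertex_cover X Y M CX0 CY0" "card CX0 + card CY0 < N - q"
    using threshold_vertex_cover[OF fin M closed] by blast
  obtain CX CY where cover: "min_vertex_cover X Y M CX CY"
    using min_vertex_cover_exists[OF cover0(1)] by blast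
  have "card CX + card CY \<le> card CX0 + card CY0"
    using cover cover0(1) unfolding min_vertex_cover_def by blast
  then have less: "card CX + card CY + q + 1 \<le> N" using cover0(2) by linarith
  have C: "CX \<subseteq> X" "CY \<subseteq> Y" using cover unfolding min_vertex_cover_def vertex_cover_def by auto
  have "N - card CX \<le> out_deg M x" if "x \<in> CX" for x
    using min_vertex_cover_out_deg[OF cover fin(1) closed that] by linarith
  then have "card CX * (N - card CX) \<le> (\<Sum>x\<in>CX. out_deg M x)"
    using sum_mono[of CX "\<lambda>_. N - card CX" "out_deg M"] by simp
  moreover have "N - card CY \<le> out_deg (converse M) y" if "y \<in> CY" for y
    using min_vertex_cover_out_deg_converse[OF cover fin(2) closed that] by linarith
  then have "card CY * (N - card CY) \<le> (\<Sum>y\<in>CY. out_deg (converse M) y)"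
    using sum_mono[of CY "\<lambda>_. N - card CY" "out_deg (converse M)"] by simp
  ultimately have "card CX * (N - card CX) + card CY * (N - card CY) \<le> card M + card CX * card CY"
    using sum_out_deg_le_card_plus_card_Times[OF fin M C] by linarith
  moreover have "\<not> (card CX + card CY \<le> q) \<Longrightarrow>
      (q + 1) * (N - q - 1) + card CX * card CY \<le> card CX * (N - card CX) + card CY * (N - card CY)"
    using less by (intro mult_diff_add_mult_le) auto
  ultimately have "card CX + card CY \<le> q" using small by linarith
  then show ?thesis using cover that by blast
qed

definition Knn_minus_stars :: "nat \<Rightarrow> nat \<Rightarrow> bool \<Rightarrow> ((bool \<times> nat) \<times> (bool \<times> nat)) set" where
  "Knn_minus_stars n c e = {((False, i), (True, j)) | i j. i < n \<and> j < n \<and>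
     \<not> ((i = n - 1 \<and> j < c) \<or> (j = n - 1 \<and> i < c) \<or> (i = n - 1 \<and> j = n - 1 \<and> \<not> e))}"

lemma N1E_eq_Knn_minus_stars:
  assumes "p + 4 \<le> n"
  shows "N1E n p = Knn_minus_stars n (n - p - 2) True"
  using assms unfolding N1E_def Knn_minus_stars_def blk1_def
  by (intro Collect_cong ex_cong1 conj_cong refl) auto

lemma N2E_eq_Knn_minus_stars:
  assumes "p + 4 \<le> n"
  shows "N2E n p = Knn_minus_stars n (n - p - 3) False"
  using assms unfolding N2E_def Knn_minus_stars_def blk2_def
  by (intro Collect_cong ex_cong1 conj_cong refl) auto

lemma enumeration_with_prefix_and_last:
  assumes fin: "finite X" and cX: "card X = n" and x0: "x0 \<in> X" and A: "A \<subseteq> X - {x0}"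
    and cA: "card A = c"
  obtains ix where "bij_betw ix X {0..<n}" "\<And>x. x \<in> X \<Longrightarrow> ix x = n - 1 \<longleftrightarrow> x = x0"
    "\<And>x. x \<in> X \<Longrightarrow> ix x < c \<longleftrightarrow> x \<in> A"
proof -
  have finA: "finite A" using A fin finite_subset by blast
  have cle: "c \<le> n - 1" using cA cX card_mono[OF _ A] fin x0 by (simp add: card_Diff_singleton)
  have n1: "1 \<le> n" using cX x0 fin card_0_eq by fastforce
  obtain gA where gA: "bij_betw gA A {0..<c}"
    using finite_same_card_bij[OF finA, of "{0..<c}"] cA by auto
  define R where "R = X - {x0} - A"
  have finR: "finite R" using fin R_def by simp
  have cR: "card R = n - 1 - c" unfolding R_def using A cA cX x0 fin finA
    by (simp add: card_Diff_subset card_Diff_singleton)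
  obtain gR where gR: "bij_betw gR R {c..<n-1}"
    using finite_same_card_bij[OF finR, of "{c..<n-1}"] cR by auto
  define ix where "ix x = (if x = x0 then n - 1 else if x \<in> A then gA x else gR x)" for x
  have bijA: "bij_betw ix A {0..<c}"
    by (rule bij_betw_cong[THEN iffD1, OF _ gA]) (use A in \<open>auto simp: ix_def\<close>)
  have bijR: "bij_betw ix R {c..<n-1}"
    by (rule bij_betw_cong[THEN iffD1, OF _ gR]) (auto simp: ix_def R_def)
  have bij_x0: "bij_betw ix {x0} {n-1}" by (simp add: ix_def bij_betw_def)
  have "bij_betw ix ((A \<union> R) \<union> {x0}) (({0..<c} \<union> {c..<n-1}) \<union> {n-1})"
    by (rule bij_betw_combine[OF bij_betw_combine[OF bijA bijR] bij_x0]) (use cle in auto)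
  moreover have "(A \<union> R) \<union> {x0} = X" using A x0 R_def by auto
  moreover have "({0..<c} \<union> {c..<n-1}) \<union> {n-1} = {0..<n}" using cle n1 by auto
  ultimately have bij: "bij_betw ix X {0..<n}" by simp
  have last_iff: "ix x = n - 1 \<longleftrightarrow> x = x0" if "x \<in> X" for x
  proof
    assume "ix x = n - 1"
    then have "ix x = ix x0" by (simp add: ix_def)
    then show "x = x0" using inj_onD[OF bij_betw_imp_inj_on[OF bij] _ that x0] by blast
  qed (simp add: ix_def)
  have prefix_iff: "ix x < c \<longleftrightarrow> x \<in> A" if "x \<in> X" for x
  proof
    assume "ix x < c"
    show "x \<in> A"
    proof (rule ccontr)
      assume "x \<notin> A"
      then have "x \<in> R \<union> {x0}" using that R_def by auto
      then have "ix x \<in> {c..<n-1} \<union> {n-1}" using bijR bij_x0 bij_betw_apply by fastforce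
      then show False using \<open>ix x < c\<close> cle by auto
    qed
  next
    assume "x \<in> A"
    then show "ix x < c" using bijA bij_betw_apply by fastforce
  qed
  show ?thesis using that bij last_iff prefix_iff by blast
qed

lemma bip_iso_Knn_minus_stars:
  assumes bg: "bip_graph X Y E" and cX: "card X = n" and cY: "card Y = n"
    and x0: "x0 \<in> X" and y0: "y0 \<in> Y" and A: "A \<subseteq> X - {x0}" and B: "B \<subseteq> Y - {y0}"
    and cA: "card A = c" and cB: "card B = c"
    and hE: "\<forall>x\<in>X. \<forall>y\<in>Y. (x, y) \<in> E \<longleftrightarrow>
        \<not> ((x = x0 \<and> y \<in> B) \<or> (y = y0 \<and> x \<in> A) \<or> (x = x0 \<and> y = y0 \<and> \<not> e))"
  shows "bip_iso X Y E (NX n) (NY n) (Knn_minus_stars n c e)"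
proof -
  have finX: "finite X" and finY: "finite Y" and disj: "X \<inter> Y = {}" and EXY: "E \<subseteq> X \<times> Y"
    using bg by (auto simp: bip_graph_def)
  obtain ix where ix: "bij_betw ix X {0..<n}" "\<And>x. x \<in> X \<Longrightarrow> ix x = n - 1 \<longleftrightarrow> x = x0"
    "\<And>x. x \<in> X \<Longrightarrow> ix x < c \<longleftrightarrow> x \<in> A"
    using enumeration_with_prefix_and_last[OF finX cX x0 A cA] by blast
  obtain iy where iy: "bij_betw iy Y {0..<n}" "\<And>y. y \<in> Y \<Longrightarrow> iy y = n - 1 \<longleftrightarrow> y = y0"
    "\<And>y. y \<in> Y \<Longrightarrow> iy y < c \<longleftrightarrow> y \<in> B"
    using enumeration_with_prefix_and_last[OF finY cY y0 B cB] by blast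
  define f where "f v = (if v \<in> X then (False, ix v) else (True, iy v))" for v
  have bij_Pair: "bij_betw (Pair b) {0..<n} (Pair b ` {0..<n})" for b :: bool
    by (rule inj_on_imp_bij_betw) (simp add: inj_on_def)
  have NX: "NX n = Pair False ` {0..<n}" by (auto simp: NX_def)
  have NY: "NY n = Pair True ` {0..<n}" by (auto simp: NY_def)
  have bX: "bij_betw f X (NX n)"
    unfolding NX by (rule bij_betw_cong[THEN iffD1, OF _ bij_betw_trans[OF ix(1) bij_Pair]]) (simp add: f_def)
  have bY: "bij_betw f Y (NY n)"
    unfolding NY by (rule bij_betw_cong[THEN iffD1, OF _ bij_betw_trans[OF iy(1) bij_Pair]])
      (use disj in \<open>auto simp: f_def\<close>)
  have bij: "bij_betw f (X \<union> Y) (NX n \<union> NY n)"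
    by (rule bij_betw_combine[OF bX bY]) (auto simp: NX_def NY_def)
  have ixn: "ix x < n" if "x \<in> X" for x using ix(1) that bij_betw_apply by fastforce
  have iyn: "iy y < n" if "y \<in> Y" for y using iy(1) that bij_betw_apply by fastforce
  have key: "(x, y) \<in> E \<longleftrightarrow> ((False, ix x), (True, iy y)) \<in> Knn_minus_stars n c e"
    if "x \<in> X" "y \<in> Y" for x y
    using hE that ix(2,3)[OF that(1)] iy(2,3)[OF that(2)] ixn[OF that(1)] iyn[OF that(2)]
    by (auto simp: Knn_minus_stars_def)
  have adj: "bip_adj E u v \<longleftrightarrow> bip_adj (Knn_minus_stars n c e) (f u) (f v)"
    if "u \<in> X \<union> Y" "v \<in> X \<union> Y" for u v
    using that key[of u v] key[of v u] EXY disj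
    by (auto simp: bip_adj_def f_def Knn_minus_stars_def)
  show ?thesis unfolding bip_iso_def using bij adj by blast
qed

lemma bip_iso_N_if_compl_two_stars:
  assumes bg: "bip_graph X Y E" and cX: "card X = n" and cY: "card Y = n" and n: "p + 4 \<le> n"
    and x0: "x0 \<in> X" and y0: "y0 \<in> Y"
    and cover: "vertex_cover X Y (X \<times> Y - E) {x0} {y0}"
    and deg_x0: "out_deg (X \<times> Y - E) x0 = n - p - 2"
    and deg_y0: "out_deg (converse (X \<times> Y - E)) y0 = n - p - 2"
  shows "bip_iso X Y E (NX n) (NY n) (N1E n p) \<or> bip_iso X Y E (NX n) (NY n) (N2E n p)"
proof -
  define A where "A = converse (X \<times> Y - E) `` {y0}"
  define B where "B = (X \<times> Y - E) `` {x0}"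
  have AB: "A \<subseteq> X" "B \<subseteq> Y" by (auto simp: A_def B_def)
  then have fin: "finite A" "finite B"
    using bg by (auto simp: bip_graph_def elim: finite_subset)
  have cAB: "card A = n - p - 2" "card B = n - p - 2"
    using deg_y0 deg_x0 unfolding A_def B_def out_deg_def by simp_all
  have compl: "(x, y) \<notin> E \<longleftrightarrow> (x = x0 \<and> y \<in> B) \<or> (y = y0 \<and> x \<in> A)"
    if "x \<in> X" "y \<in> Y" for x y
  proof -
    have "x = x0 \<or> y = y0" if "(x, y) \<notin> E"
      using cover \<open>x \<in> X\<close> \<open>y \<in> Y\<close> that unfolding vertex_cover_def by fast
    then show ?thesis using that by (auto simp: A_def B_def)
  qed
  show ?thesis
  proof (cases "(x0, y0) \<in> E")
    case True
    have sub: "A \<subseteq> X - {x0}" "B \<subseteq> Y - {y0}" using AB True by (auto simp: A_def B_def)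
    have "\<forall>x\<in>X. \<forall>y\<in>Y. (x, y) \<in> E \<longleftrightarrow>
        \<not> ((x = x0 \<and> y \<in> B) \<or> (y = y0 \<and> x \<in> A) \<or> (x = x0 \<and> y = y0 \<and> \<not> True))"
      using compl by blast
    then have "bip_iso X Y E (NX n) (NY n) (Knn_minus_stars n (n - p - 2) True)"
      by (rule bip_iso_Knn_minus_stars[OF bg cX cY x0 y0 sub cAB])
    then show ?thesis using N1E_eq_Knn_minus_stars[OF n] by simp
  next
    case False
    then have in_AB: "x0 \<in> A" "y0 \<in> B" using x0 y0 by (auto simp: A_def B_def)
    have sub: "A - {x0} \<subseteq> X - {x0}" "B - {y0} \<subseteq> Y - {y0}" using AB by auto
    have card: "card (A - {x0}) = n - p - 3" "card (B - {y0}) = n - p - 3"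
      using cAB fin in_AB by auto
    have "\<forall>x\<in>X. \<forall>y\<in>Y. (x, y) \<in> E \<longleftrightarrow>
        \<not> ((x = x0 \<and> y \<in> B - {y0}) \<or> (y = y0 \<and> x \<in> A - {x0}) \<or> (x = x0 \<and> y = y0 \<and> \<not> False))"
      using compl in_AB by auto
    then have "bip_iso X Y E (NX n) (NY n) (Knn_minus_stars n (n - p - 3) False)"
      by (rule bip_iso_Knn_minus_stars[OF bg cX cY x0 y0 sub card])
    then show ?thesis using N2E_eq_Knn_minus_stars[OF n] by simp
  qed
qed

lemma bip_deg_eq_out_deg:
  assumes "bip_graph X Y E" "x \<in> X"
  shows "bip_deg X Y E x = out_deg E x"
  unfolding bip_deg_def bip_adj_def out_deg_def
  using assms by (intro arg_cong[where f = card]) (auto simp: bip_graph_def)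

lemma bip_deg_eq_out_deg_converse:
  assumes "bip_graph X Y E" "y \<in> Y"
  shows "bip_deg X Y E y = out_deg (converse E) y"
  unfolding bip_deg_def bip_adj_def out_deg_def
  using assms by (intro arg_cong[where f = card]) (auto simp: bip_graph_def)

lemma out_deg_add_out_deg_Diff:
  assumes "finite Y" "E \<subseteq> X \<times> Y" "x \<in> X"
  shows "out_deg E x + out_deg (X \<times> Y - E) x = card Y"
proof -
  have "card (E `` {x}) + card ((X \<times> Y - E) `` {x}) = card (E `` {x} \<union> (X \<times> Y - E) `` {x})"
    using assms(1,2) by (intro card_Un_disjoint[symmetric]) (auto intro: finite_subset[OF _ assms(1)])
  also have "E `` {x} \<union> (X \<times> Y - E) `` {x} = Y" using assms(2,3) by auto
  finally show ?thesis by (simp only: out_deg_def)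
qed

lemma r_closed_compl_out_deg:
  assumes bg: "bip_graph X Y E" and closed: "r_closed r X Y E"
    and xy: "(x, y) \<in> X \<times> Y - E"
  shows "card X + card Y + 1 - r \<le> out_deg (X \<times> Y - E) x + out_deg (converse (X \<times> Y - E)) y"
proof -
  have fin: "finite X" "finite Y" and E: "E \<subseteq> X \<times> Y" using bg by (auto simp: bip_graph_def)
  have x: "x \<in> X" and y: "y \<in> Y" using xy by auto
  have conv: "converse (X \<times> Y - E) = Y \<times> X - converse E" by auto
  have "out_deg (converse E) y + out_deg (converse (X \<times> Y - E)) y = card X"
    unfolding conv using E y by (intro out_deg_add_out_deg_Diff[OF fin(1)]) auto
  moreover have "out_deg E x + out_deg (X \<times> Y - E) x = card Y"
    using E x by (rule out_deg_add_out_deg_Diff[OF fin(2)])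
  moreover have "bip_deg X Y E x + bip_deg X Y E y < r"
    using closed x y xy unfolding r_closed_def by blast
  then have "out_deg E x + out_deg (converse E) y < r"
    by (simp add: bip_deg_eq_out_deg[OF bg x] bip_deg_eq_out_deg_converse[OF bg y])
  ultimately show ?thesis by linarith
qed

lemma has_K_if_vertex_cover_compl:
  assumes fin: "finite X" "finite Y" and cover: "vertex_cover X Y (X \<times> Y - E) CX CY"
    and a: "a \<le> card X - card CX" and b: "b \<le> card Y - card CY"
  shows "has_K a b X Y E"
proof -
  have C: "CX \<subseteq> X" "CY \<subseteq> Y" using cover by (auto simp: vertex_cover_def)
  have "a \<le> card (X - CX)" using a C(1) fin(1) by (simp add: card_Diff_subset finite_subset)
  then obtain S where S: "S \<subseteq> X - CX" "card S = a" using obtain_subset_with_card_n by blast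
  have "b \<le> card (Y - CY)" using b C(2) fin(2) by (simp add: card_Diff_subset finite_subset)
  then obtain T where T: "T \<subseteq> Y - CY" "card T = b" using obtain_subset_with_card_n by blast
  have "S \<times> T \<subseteq> E" using cover S(1) T(1) unfolding vertex_cover_def by blast
  then show ?thesis unfolding has_K_def using S T by (intro exI[of _ S] exI[of _ T]) auto
qed

lemma K_sub_or_N_iso_if_small_min_vertex_cover:
  assumes bg: "bip_graph X Y E" and cX: "card X = n" and cY: "card Y = n"
    and pk: "p \<le> k" and nk: "2 * k - p + 2 \<le> n" and md: "min_deg_ge k X Y E"
    and closed: "\<forall>(x, y)\<in>X \<times> Y - E.
      n - p - 1 \<le> out_deg (X \<times> Y - E) x + out_deg (converse (X \<times> Y - E)) y"
    and cover: "min_vertex_cover X Y (X \<times> Y - E) CX CY" and small: "card CX + card CY \<le> k - p"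
  shows "K_sub n (n - k + p) X Y E
    \<or> (k = p + 2 \<and> (bip_iso X Y E (NX n) (NY n) (N1E n p) \<or> bip_iso X Y E (NX n) (NY n) (N2E n p)))"
proof -
  define M where "M = X \<times> Y - E"
  have fin: "finite X" "finite Y" and E: "E \<subseteq> X \<times> Y" using bg by (auto simp: bip_graph_def)
  have C: "CX \<subseteq> X" "CY \<subseteq> Y" "finite CX" "finite CY"
    using cover fin by (auto simp: min_vertex_cover_def vertex_cover_def elim: finite_subset)
  have vcover: "vertex_cover X Y M CX CY" using cover by (simp add: M_def min_vertex_cover_def)
  have degX: "out_deg M x \<le> n - k" if "x \<in> X" for x
  proof -
    have "k \<le> bip_deg X Y E x" using md that by (simp add: min_deg_ge_def)
    then show ?thesis
      using out_deg_add_out_deg_Diff[OF fin(2) E that] bip_deg_eq_out_deg[OF bg that] cY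
      unfolding M_def by linarith
  qed
  have degY: "out_deg (converse M) y \<le> n - k" if "y \<in> Y" for y
  proof -
    have "k \<le> bip_deg X Y E y" using md that by (simp add: min_deg_ge_def)
    moreover have "converse M = Y \<times> X - converse E" by (auto simp: M_def)
    moreover have "converse E \<subseteq> Y \<times> X" using E by auto
    ultimately show ?thesis
      using out_deg_add_out_deg_Diff[OF fin(1), of "converse E" Y y]
        bip_deg_eq_out_deg_converse[OF bg that] cX that by simp
  qed
  consider "CX = {}" | "CY = {}" | x0 y0 where "x0 \<in> CX" "y0 \<in> CY" by blast
  then show ?thesis
  proof cases
    case 1
    then have "has_K n (n - k + p) X Y E"
      using small cX cY pk nk by (intro has_K_if_vertex_cover_compl[OF fin vcover[unfolded M_def]]) auto
    then show ?thesis by (simp add: K_sub_def)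
  next
    case 2
    then have "has_K (n - k + p) n X Y E"
      using small cX cY pk nk by (intro has_K_if_vertex_cover_compl[OF fin vcover[unfolded M_def]]) auto
    then show ?thesis by (simp add: K_sub_def)
  next
    case 3
    have "n - p - 1 \<le> out_deg M x0 + card CX"
      using min_vertex_cover_out_deg[OF cover fin(1) closed \<open>x0 \<in> CX\<close>] by (simp add: M_def)
    moreover have "n - p - 1 \<le> out_deg (converse M) y0 + card CY"
      using min_vertex_cover_out_deg_converse[OF cover fin(2) closed \<open>y0 \<in> CY\<close>]
      by (simp add: M_def)
    moreover have "out_deg M x0 \<le> n - k" "out_deg (converse M) y0 \<le> n - k"
      using degX degY C \<open>x0 \<in> CX\<close> \<open>y0 \<in> CY\<close> by auto
    moreover have "1 \<le> card CX" "1 \<le> card CY"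
      using C \<open>x0 \<in> CX\<close> \<open>y0 \<in> CY\<close> by (auto simp: Suc_le_eq card_gt_0_iff)
    ultimately have k: "k = p + 2" and cards: "card CX = 1" "card CY = 1"
      and degs: "out_deg M x0 = n - p - 2" "out_deg (converse M) y0 = n - p - 2"
      using small pk nk by linarith+
    have "CX = {x0}" "CY = {y0}"
      using cards \<open>x0 \<in> CX\<close> \<open>y0 \<in> CY\<close> by (auto simp: card_1_singleton_iff)
    then have "vertex_cover X Y (X \<times> Y - E) {x0} {y0}" using vcover by (simp add: M_def)
    then show ?thesis
      using bip_iso_N_if_compl_two_stars[OF bg cX cY _ _ _ _ degs[unfolded M_def]] C k nk
        \<open>x0 \<in> CX\<close> \<open>y0 \<in> CY\<close> by auto
  qed
qed

lemma card_compl_less_if_card_gt: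
  assumes bg: "bip_graph X Y E" and cX: "card X = n" and cY: "card Y = n"
    and "p \<le> k" "k + 2 \<le> n"
    and "int (card E) > int n * (int n - int k + int p - 1) + (int k + 2) * (int k - int p + 1)"
  shows "card (X \<times> Y - E) < (k - p + 1) * (n - p - 1 - (k - p) - 1)"
proof -
  have fin: "finite X" "finite Y" and E: "E \<subseteq> X \<times> Y" using bg by (auto simp: bip_graph_def)
  have "card E \<le> card (X \<times> Y)" using E fin by (intro card_mono) auto
  then have card: "card (X \<times> Y - E) + card E = n * n"
    using E fin cX cY by (simp add: card_Diff_subset card_cartesian_product finite_subset)
  have diff: "int (k - p + 1) = int k - int p + 1" "int (n - p - 1 - (k - p) - 1) = int n - int k - 2"
    using assms(4,5) by auto
  have "int ((k - p + 1) * (n - p - 1 - (k - p) - 1)) = (int k - int p + 1) * (int n - int k - 2)"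
    by (simp only: of_nat_mult diff)
  also have "\<dots> = int n * int n - (int n * (int n - int k + int p - 1) + (int k + 2) * (int k - int p + 1))"
    by (simp add: algebra_simps)
  also have "\<dots> > int (card (X \<times> Y - E))"
    using card assms(6) by (simp add: algebra_simps flip: of_nat_add of_nat_mult)
  finally show ?thesis by linarith
qed

theorem lemma3p1:
  fixes X Y :: "'a set" and E :: "('a \<times> 'a) set" and n k p :: nat
  assumes "p \<le> k"
    and "n \<ge> 2 * k - p + 2"
    and "bip_graph X Y E"
    and "card X = n" and "card Y = n"
    and "r_closed (n + p + 2) X Y E"
    and "int (card E) > int n * (int n - int k + int p - 1) + (int k + 2) * (int k - int p + 1)"
  shows "(\<exists>a b. a \<ge> 1 \<and> b \<ge> 1 \<and> a + b = 2 * n - k + p \<and> has_K a b X Y E)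
    \<and> (min_deg_ge k X Y E \<longrightarrow>
         K_sub n (n - k + p) X Y E
         \<or> (k = p + 2 \<and> (bip_iso X Y E (NX n) (NY n) (N1E n p)
                          \<or> bip_iso X Y E (NX n) (NY n) (N2E n p))))"
proof -
  note pk = assms(1) and nk = assms(2) and bg = assms(3) and cX = assms(4) and cY = assms(5)
  have fin: "finite X" "finite Y" using bg by (auto simp: bip_graph_def)
  have closed: "\<forall>(x, y)\<in>X \<times> Y - E.
      n - p - 1 \<le> out_deg (X \<times> Y - E) x + out_deg (converse (X \<times> Y - E)) y"
    using r_closed_compl_out_deg[OF bg assms(6)] cX cY by fastforce
  have kn: "k + 2 \<le> n" and q: "2 * (k - p) + 1 \<le> n - p - 1" using pk nk by linarith+
  obtain CX CY where cover: "min_vertex_cover X Y (X \<times> Y - E) CX CY"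
    and small: "card CX + card CY \<le> k - p"
    using small_min_vertex_cover[OF fin Diff_subset closed q
        card_compl_less_if_card_gt[OF bg cX cY pk kn assms(7)]] by blast
  have "has_K (n - card CX) (n - (k - p) + card CX) X Y E"
    using cover fin cX cY pk nk small
    by (intro has_K_if_vertex_cover_compl) (auto simp: min_vertex_cover_def)
  moreover have "1 \<le> n - card CX" "1 \<le> n - (k - p) + card CX"
    "n - card CX + (n - (k - p) + card CX) = 2 * n - k + p"
    using small pk nk by auto
  ultimately have "\<exists>a b. a \<ge> 1 \<and> b \<ge> 1 \<and> a + b = 2 * n - k + p \<and> has_K a b X Y E"
    by blast
  then show ?thesis
    using K_sub_or_N_iso_if_small_min_vertex_cover[OF bg cX cY pk nk _ closed cover small] by blast
qed

end
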